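(* Let $F$ be a distribution function on $[0,1]$ with a positive, non-increasing, differentiable density $g$ and non-decreasing hazard ratio $g(x)/(1-F(x))$. Let $\{f_{i,j}\}$, $f_{i,j}=f_{j,i}$, be independent with distribution $F$, let $I\subseteq[n]$, $|I|=r$, and let $D_I$ be the event that $f_{i,j}\ge (f_{i,i}+f_{j,j})/2$ for all distinct $i,j\in I$. For $C\subseteq[0,1]^r$ set $\mathrm{P}_C(D_I)=\mathrm{P}\bigl(D_I\cap\{(f_{i,i})_{i\in I}\in C\}\bigr)$. Let $C_1=\{\mathbf x\in[0,1]^r: |\sum_{i}F(x_i)-2|\le r^{-1/3}\}$ and, for fixed $k>1$, \[ C_2=\Bigl\{\mathbf x\in C_1:\ \max_i\frac{F(x_i)}{\sum_jF(x_j)}\le k\frac{\log r}{r}\Bigr\}. \] Then for every $\alpha<k-1$ and all sufficiently large $r$, \[ \mathrm{P}_{C_1}(D_I)-\mathrm{P}_{C_2}(D_I)\le\left(\frac{2}{r}\right)^r r^{-\alpha}. \] *)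

theory Defs
  imports "HOL-Probability.Probability"
begin

text \<open>Index pairs (i,j) with i \<le> j < n: one independent weight f_{i,j} = f_{j,i} per pair.\<close>
definition pairs :: "nat \<Rightarrow> (nat \<times> nat) set" where
  "pairs n = {(i, j). i \<le> j \<and> j < n}"

definition dens_measure :: "(real \<Rightarrow> real) \<Rightarrow> real measure" where
  "dens_measure g = density lborel (\<lambda>x. ennreal (indicator {0..1} x * g x))"

definition weight_space :: "nat \<Rightarrow> (real \<Rightarrow> real) \<Rightarrow> ((nat \<times> nat) \<Rightarrow> real) measure" where
  "weight_space n g = PiM (pairs n) (\<lambda>_. dens_measure g)"

definition fval :: "((nat \<times> nat) \<Rightarrow> real) \<Rightarrow> nat \<Rightarrow> nat \<Rightarrow> real" where
  "fval \<omega> i j = \<omega> (min i j, max i j)"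

definition event_D :: "nat \<Rightarrow> (real \<Rightarrow> real) \<Rightarrow> nat set \<Rightarrow> ((nat \<times> nat) \<Rightarrow> real) set" where
  "event_D n g I = {\<omega> \<in> space (weight_space n g).
     \<forall>i\<in>I. \<forall>j\<in>I. i \<noteq> j \<longrightarrow> fval \<omega> i j \<ge> (fval \<omega> i i + fval \<omega> j j) / 2}"

definition prob_C :: "nat \<Rightarrow> (real \<Rightarrow> real) \<Rightarrow> nat set \<Rightarrow> ((nat \<Rightarrow> real) \<Rightarrow> bool) \<Rightarrow> real" where
  "prob_C n g I C = measure (weight_space n g)
     (event_D n g I \<inter> {\<omega> \<in> space (weight_space n g). C (\<lambda>i. fval \<omega> i i)})"

definition in_C1 :: "(real \<Rightarrow> real) \<Rightarrow> nat set \<Rightarrow> (nat \<Rightarrow> real) \<Rightarrow> bool" where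
  "in_C1 F I x \<longleftrightarrow> (\<forall>i\<in>I. x i \<in> {0..1}) \<and>
     \<bar>(\<Sum>i\<in>I. F (x i)) - 2\<bar> \<le> real (card I) powr (-1/3)"

definition in_C2 :: "(real \<Rightarrow> real) \<Rightarrow> real \<Rightarrow> nat set \<Rightarrow> (nat \<Rightarrow> real) \<Rightarrow> bool" where
  "in_C2 F k I x \<longleftrightarrow> in_C1 F I x \<and>
     (\<forall>i\<in>I. F (x i) / (\<Sum>j\<in>I. F (x j)) \<le> k * ln (real (card I)) / real (card I))"

end

theory Submission
  imports Defs
begin

text \<open>
  On \<open>D_I \<inter> (C_1 - C_2)\<close> some \<open>i \<in> I\<close> has \<open>F(f_ii) \<ge> c \<Sum>_j F(f_jj)\<close> with
  \<open>c = k log r / r\<close>, and each of these \<open>r\<close> events is bounded by an exponential moment.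
  Given the diagonal \<open>x\<close>, the off-diagonal weights are independent, and since a non-increasing
  density makes \<open>F\<close> concave,
  \<open>P(f_jl \<ge> (x_j + x_l)/2) = 1 - F((x_j + x_l)/2) \<le> exp(-(F(x_j) + F(x_l))/2)\<close>;
  over all pairs this multiplies to \<open>exp(-\<lambda> \<Sum>_j F(x_j))\<close> with \<open>\<lambda> = (r-1)/2\<close>.
  Inserting the factor \<open>exp(t (F(x_i) - c \<Sum>_j F(x_j))) \<ge> 1\<close> and using that \<open>F(f_jj)\<close> is
  uniform on [0,1] bounds the event by \<open>1/((\<lambda>+tc-t) (\<lambda>+tc)^(r-1))\<close>. The choice
  \<open>t = \<lambda>(1-\<epsilon>)/(1-c)\<close> turns this into \<open>(2/(r-1))^r ((1-c)/(1-c\<epsilon>))^(r-1) / \<epsilon>\<close>, which is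
  \<open>(2/r)^r O(r^(-(1-2\<epsilon>)k))\<close>; for small \<open>\<epsilon>\<close> this beats the factor \<open>r\<close> of the union
  bound by \<open>r^(-\<alpha>)\<close>.
\<close>

definition offdiag_pairs :: "nat set \<Rightarrow> (nat \<times> nat) set" where
  "offdiag_pairs I = {(j, l). j \<in> I \<and> l \<in> I \<and> j < l}"

lemma finite_offdiag_pairs: "finite I \<Longrightarrow> finite (offdiag_pairs I)"
  unfolding offdiag_pairs_def by (rule finite_subset[of _ "I \<times> I"]) auto

lemma sum_offdiag_pairs:
  fixes a :: "nat \<Rightarrow> 'a::comm_semiring_1"
  assumes fin: "finite I"
  shows "(\<Sum>p\<in>offdiag_pairs I. a (fst p) + a (snd p)) = of_nat (card I - 1) * (\<Sum>j\<in>I. a j)"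
proof -
  define swap :: "nat \<times> nat \<Rightarrow> nat \<times> nat" where "swap = (\<lambda>(j, l). (l, j))"
  define lower where "lower = swap ` offdiag_pairs I"
  have fins: "finite (offdiag_pairs I)" "finite lower"
    using finite_offdiag_pairs[OF fin] by (auto simp: lower_def)
  have disj: "offdiag_pairs I \<inter> lower = {}" and un: "offdiag_pairs I \<union> lower = Sigma I (\<lambda>j. I - {j})"
    by (auto simp: offdiag_pairs_def lower_def swap_def image_iff)
  have "(\<Sum>p\<in>offdiag_pairs I. a (snd p)) = (\<Sum>p\<in>lower. a (fst p))"
    unfolding lower_def by (subst sum.reindex) (auto simp: inj_on_def swap_def case_prod_beta)
  then have "(\<Sum>p\<in>offdiag_pairs I. a (fst p) + a (snd p)) = (\<Sum>p\<in>offdiag_pairs I \<union> lower. a (fst p))"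
    using sum.union_disjoint[OF fins disj, of "\<lambda>p. a (fst p)"] by (simp add: sum.distrib case_prod_beta)
  also have "\<dots> = (\<Sum>j\<in>I. \<Sum>l\<in>I - {j}. a j)"
    unfolding un using sum.Sigma[of I "\<lambda>j. I - {j}" "\<lambda>j l. a j"] fin by (simp add: split_def)
  also have "\<dots> = (\<Sum>j\<in>I. of_nat (card I - 1) * a j)"
    using fin by (intro sum.cong) (simp_all add: card_Diff_singleton)
  also have "\<dots> = of_nat (card I - 1) * (\<Sum>j\<in>I. a j)"
    by (simp add: sum_distrib_left)
  finally show ?thesis .
qed

lemma exp_tilt_eq_prod:
  fixes a :: "nat \<Rightarrow> real"
  assumes fin: "finite I" and i: "i \<in> I"
  shows "exp (t * (a i - c * (\<Sum>j\<in>I. a j))) * exp (- lam * (\<Sum>j\<in>I. a j))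
       = (\<Prod>j\<in>I. exp (- (lam + t * c - (if j = i then t else 0)) * a j))"
proof -
  have "(\<Sum>j\<in>I. - (lam + t * c - (if j = i then t else 0)) * a j)
      = (\<Sum>j\<in>I. - (lam + t * c) * a j + (if j = i then t * a j else 0))"
    by (intro sum.cong) (auto simp: algebra_simps)
  also have "\<dots> = - (lam + t * c) * (\<Sum>j\<in>I. a j) + t * a i"
    using fin i by (simp add: sum.distrib sum_distrib_left)
  also have "\<dots> = t * (a i - c * (\<Sum>j\<in>I. a j)) + - lam * (\<Sum>j\<in>I. a j)"
    by (simp add: algebra_simps)
  finally show ?thesis by (simp add: exp_sum[OF fin, symmetric] exp_add[symmetric])
qed

lemma prod_tilted_le:
  fixes a t :: real
  assumes fin: "finite I" and i: "i \<in> I" and t: "0 \<le> t" and pos: "0 < a - t"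
  shows "(\<Prod>j\<in>I. (1 - exp (- (a - (if j = i then t else 0)))) / (a - (if j = i then t else 0)))
       \<le> 1 / (a - t) * (1 / a) ^ (card I - 1)"
proof -
  have m_pos: "0 < a - (if j = i then t else 0)" for j using t pos by auto
  have bound: "0 \<le> (1 - exp (- m)) / m \<and> (1 - exp (- m)) / m \<le> 1 / m" if "0 < m" for m :: real
    using that by (auto intro!: divide_right_mono divide_nonneg_pos)
  have "(\<Prod>j\<in>I. (1 - exp (- (a - (if j = i then t else 0)))) / (a - (if j = i then t else 0)))
      \<le> (\<Prod>j\<in>I. 1 / (a - (if j = i then t else 0)))"
    by (intro prod_mono bound m_pos)
  also have "\<dots> = 1 / (a - t) * (\<Prod>j\<in>I - {i}. 1 / a)"
    by (subst prod.remove[OF fin i]) (auto intro!: prod.cong)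
  also have "\<dots> = 1 / (a - t) * (1 / a) ^ (card I - 1)"
    using fin i by (simp add: card_Diff_singleton)
  finally show ?thesis .
qed

lemma chernoff_tilt_choice:
  fixes lam c \<epsilon> :: real
  defines "t \<equiv> lam * (1 - \<epsilon>) / (1 - c)"
  assumes lam: "0 < lam" and c: "c < 1" and \<epsilon>: "0 < \<epsilon>" "\<epsilon> < 1"
  shows "0 \<le> t" and "lam + t * c - t = lam * \<epsilon>" and "0 < lam + t * c"
    and "1 / (lam + t * c - t) * (1 / (lam + t * c)) ^ m
       = (1 / lam) ^ Suc m / \<epsilon> * ((1 - c) / (1 - c * \<epsilon>)) ^ m"
proof -
  show "0 \<le> t" using lam \<epsilon> c by (simp add: t_def)
  have tc: "t * (1 - c) = lam * (1 - \<epsilon>)" using c by (simp add: t_def)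
  show e1: "lam + t * c - t = lam * \<epsilon>" using tc by (simp add: algebra_simps)
  have "(lam + t * c) * (1 - c) = lam * (1 - c) + c * (t * (1 - c))" by (simp add: algebra_simps)
  also have "\<dots> = lam * (1 - c * \<epsilon>)" unfolding tc by (simp add: algebra_simps)
  finally have eq: "(lam + t * c) * (1 - c) = lam * (1 - c * \<epsilon>)" .
  have c\<epsilon>: "c * \<epsilon> < 1"
  proof (cases "0 \<le> c")
    case True
    then show ?thesis using mult_left_le[of \<epsilon> c] \<epsilon> c by linarith
  next
    case False
    then show ?thesis using mult_nonpos_nonneg[of c \<epsilon>] \<epsilon> by linarith
  qed
  then have "0 < (lam + t * c) * (1 - c)" unfolding eq using lam by simp
  then show pos: "0 < lam + t * c" using c by (simp add: zero_less_mult_iff)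
  then have e2: "1 / (lam + t * c) = 1 / lam * ((1 - c) / (1 - c * \<epsilon>))"
    using eq c lam c\<epsilon> by (simp add: field_simps)
  have "1 / (lam + t * c - t) * (1 / (lam + t * c)) ^ m
      = 1 / lam * (1 / \<epsilon>) * (1 / lam * ((1 - c) / (1 - c * \<epsilon>))) ^ m"
    unfolding e1 e2 by simp
  also have "\<dots> = (1 / lam) ^ Suc m * (1 / \<epsilon>) * ((1 - c) / (1 - c * \<epsilon>)) ^ m"
    by (simp only: power_mult_distrib power_Suc ac_simps)
  finally show "1 / (lam + t * c - t) * (1 / (lam + t * c)) ^ m
       = (1 / lam) ^ Suc m / \<epsilon> * ((1 - c) / (1 - c * \<epsilon>)) ^ m" by simp
qed

lemma finite_pairs: "finite (pairs n)"
  unfolding pairs_def by (rule finite_subset[of _ "{0..<n} \<times> {0..<n}"]) auto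

lemma measurable_pred_le_real [measurable (raw)]:
  fixes f h :: "'a \<Rightarrow> real"
  shows "f \<in> borel_measurable M \<Longrightarrow> h \<in> borel_measurable M \<Longrightarrow> Measurable.pred M (\<lambda>x. f x \<le> h x)"
  unfolding pred_def by (rule borel_measurable_le)

lemma measurable_pred_atLeast_real [measurable (raw)]:
  fixes f h :: "'a \<Rightarrow> real"
  shows "f \<in> borel_measurable M \<Longrightarrow> h \<in> borel_measurable M \<Longrightarrow> Measurable.pred M (\<lambda>x. f x \<in> {h x..})"
  by (simp add: measurable_pred_le_real)

section \<open>Asymptotics of the Chernoff bound\<close>

definition excess_bound :: "real \<Rightarrow> real \<Rightarrow> nat \<Rightarrow> real" where
  "excess_bound c \<epsilon> r = (2 / (real r - 1)) ^ r / \<epsilon> * ((1 - c) / (1 - c * \<epsilon>)) ^ (r - 1)"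

lemma two_div_pred_power_le:
  assumes "2 \<le> r"
  shows "(2 / (real r - 1)) ^ r \<le> exp 2 * (2 / real r) ^ r"
proof -
  have r: "real r \<ge> 2" using assms by simp
  have "real r / (real r - 1) = 1 + 1 / (real r - 1)" using r by (simp add: field_simps)
  also have "\<dots> \<le> exp (1 / (real r - 1))" by (rule exp_ge_add_one_self)
  finally have base: "real r / (real r - 1) \<le> exp (1 / (real r - 1))" .
  have "(real r / (real r - 1)) ^ r \<le> exp (1 / (real r - 1)) ^ r"
    by (rule power_mono[OF base]) (use r in simp)
  also have "\<dots> = exp (real r / (real r - 1))" by (simp add: exp_of_nat_mult[symmetric])
  also have "\<dots> \<le> exp 2" using r by (simp add: divide_le_eq)
  finally have "(real r / (real r - 1)) ^ r \<le> exp 2" .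
  then have "(2 / real r) ^ r * (real r / (real r - 1)) ^ r \<le> (2 / real r) ^ r * exp 2"
    by (rule mult_left_mono) (use r in simp)
  moreover have "2 / (real r - 1) = 2 / real r * (real r / (real r - 1))" using r by (simp add: field_simps)
  then have "(2 / (real r - 1)) ^ r = (2 / real r) ^ r * (real r / (real r - 1)) ^ r"
    by (simp only: power_mult_distrib)
  ultimately show ?thesis by (simp add: mult.commute)
qed

lemma one_minus_div_le_exp:
  fixes c \<epsilon> :: real
  assumes c: "0 \<le> c" "c \<le> 1/2" and \<epsilon>: "0 \<le> \<epsilon>" "\<epsilon> \<le> 1"
  shows "(1 - c) / (1 - c * \<epsilon>) \<le> exp (- c * (1 - 2 * \<epsilon>))"
proof -
  have ce: "0 \<le> c * \<epsilon>" "c * \<epsilon> \<le> 1/2" using c \<epsilon> mult_left_le[of \<epsilon> c] by auto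
  have "(c * \<epsilon>) * (2 * (c * \<epsilon>)) \<le> (c * \<epsilon>) * 1"
    by (rule mult_left_mono) (use ce in auto)
  then have "- 2 * (c * \<epsilon>) \<le> - (c * \<epsilon>) - 2 * (c * \<epsilon>)\<^sup>2"
    by (simp add: power2_eq_square algebra_simps)
  also have "\<dots> \<le> ln (1 - c * \<epsilon>)" by (rule ln_one_minus_pos_lower_bound[OF ce])
  finally have "exp (- 2 * (c * \<epsilon>)) \<le> exp (ln (1 - c * \<epsilon>))" by simp
  then have lower: "exp (- 2 * (c * \<epsilon>)) \<le> 1 - c * \<epsilon>" using ce by simp
  have upper: "1 - c \<le> exp (- c)" using exp_ge_add_one_self[of "-c"] by simp
  have "(1 - c) / (1 - c * \<epsilon>) \<le> exp (- c) / exp (- 2 * (c * \<epsilon>))"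
    by (rule frac_le) (use upper lower c in auto)
  also have "\<dots> = exp (- c * (1 - 2 * \<epsilon>))" by (simp add: exp_diff[symmetric] algebra_simps)
  finally show ?thesis .
qed

lemma power_one_minus_div_le_powr:
  fixes k \<epsilon> :: real
  assumes r: "2 \<le> r" and k: "0 < k" and \<epsilon>: "0 \<le> \<epsilon>" "\<epsilon> \<le> 1/2"
    and c: "c = k * ln (real r) / real r" "c \<le> 1/2"
  shows "((1 - c) / (1 - c * \<epsilon>)) ^ (r - 1) \<le> exp k * real r powr (- (1 - 2 * \<epsilon>) * k)"
proof -
  have x: "real r \<ge> 2" using r by simp
  have c0: "0 \<le> c" unfolding c using k x by simp
  have "c * \<epsilon> \<le> 1/2" using c0 c(2) \<epsilon> mult_left_le[of \<epsilon> c] by simp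
  then have q0: "0 \<le> (1 - c) / (1 - c * \<epsilon>)" using c(2) by simp
  have "real (r - 1) * c = k * ln (real r) - k * (ln (real r) / real r)"
    unfolding c using r by (simp add: of_nat_diff field_simps)
  moreover have "k * (ln (real r) / real r) \<le> k"
  proof -
    have "ln (real r) / real r \<le> 1" using ln_le_minus_one[of "real r"] x by simp
    then show ?thesis using mult_left_mono[of "ln (real r) / real r" 1 k] k by simp
  qed
  ultimately have rc: "k * ln (real r) - k \<le> real (r - 1) * c" by simp
  have "((1 - c) / (1 - c * \<epsilon>)) ^ (r - 1) \<le> exp (- c * (1 - 2 * \<epsilon>)) ^ (r - 1)"
    by (rule power_mono[OF one_minus_div_le_exp q0]) (use c0 c(2) \<epsilon> in auto)
  also have "\<dots> = exp (- (real (r - 1) * c) * (1 - 2 * \<epsilon>))"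
    by (simp add: exp_of_nat_mult[symmetric] mult.assoc)
  also have "\<dots> \<le> exp (k + (- (1 - 2 * \<epsilon>) * k) * ln (real r))"
  proof -
    have "- (real (r - 1) * c) * (1 - 2 * \<epsilon>) \<le> - (k * ln (real r) - k) * (1 - 2 * \<epsilon>)"
      using rc \<epsilon> by (intro mult_right_mono) auto
    also have "\<dots> \<le> k + (- (1 - 2 * \<epsilon>) * k) * ln (real r)"
    proof -
      have "(1 - 2 * \<epsilon>) * k \<le> k" using \<epsilon> k by (simp add: mult_left_le_one_le)
      then show ?thesis by (simp add: algebra_simps)
    qed
    finally show ?thesis by simp
  qed
  also have "\<dots> = exp k * real r powr (- (1 - 2 * \<epsilon>) * k)"
    using x by (simp add: exp_add powr_def)
  finally show ?thesis .
qed

lemma union_excess_bound_le: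
  fixes k \<epsilon> \<alpha> :: real
  assumes r: "2 \<le> r" and k: "0 < k" and \<epsilon>: "0 < \<epsilon>" "\<epsilon> \<le> 1/2"
    and c: "c = k * ln (real r) / real r" "c \<le> 1/2"
    and small: "exp (2 + k) / \<epsilon> * real r powr (1 - (1 - 2 * \<epsilon>) * k + \<alpha>) \<le> 1"
  shows "real r * excess_bound c \<epsilon> r \<le> (2 / real r) ^ r * real r powr (- \<alpha>)"
proof -
  have x: "real r \<ge> 2" using r by simp
  have "0 \<le> c" using c(1) k x by simp
  then have "c * \<epsilon> \<le> 1/2" using c(2) \<epsilon> mult_left_le[of \<epsilon> c] by linarith
  then have q0: "0 \<le> ((1 - c) / (1 - c * \<epsilon>)) ^ (r - 1)" using c(2) by simp
  have "real r * excess_bound c \<epsilon> r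
      \<le> real r * (exp 2 * (2 / real r) ^ r / \<epsilon> * (exp k * real r powr (- (1 - 2 * \<epsilon>) * k)))"
    unfolding excess_bound_def
    using two_div_pred_power_le[OF r] power_one_minus_div_le_powr[OF r k _ \<epsilon>(2) c] \<epsilon> q0 x
    by (intro mult_left_mono mult_mono divide_right_mono) auto
  also have "\<dots> = (2 / real r) ^ r * (exp (2 + k) / \<epsilon>) * (real r * real r powr (- (1 - 2 * \<epsilon>) * k))"
    by (simp add: exp_add)
  also have "real r * real r powr (- (1 - 2 * \<epsilon>) * k) = real r powr (- \<alpha>) * real r powr (1 - (1 - 2 * \<epsilon>) * k + \<alpha>)"
    using x by (simp add: powr_add[symmetric] powr_mult_base algebra_simps)
  also have "(2 / real r) ^ r * (exp (2 + k) / \<epsilon>) * (real r powr (- \<alpha>) * real r powr (1 - (1 - 2 * \<epsilon>) * k + \<alpha>))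
      = (2 / real r) ^ r * real r powr (- \<alpha>) * (exp (2 + k) / \<epsilon> * real r powr (1 - (1 - 2 * \<epsilon>) * k + \<alpha>))"
    by (simp only: ac_simps)
  also have "\<dots> \<le> (2 / real r) ^ r * real r powr (- \<alpha>)"
    using mult_left_mono[OF small, of "(2 / real r) ^ r * real r powr (- \<alpha>)"] x by simp
  finally show ?thesis .
qed

lemma eventually_union_excess_bound_le:
  fixes k \<alpha> :: real
  assumes k: "1 < k" and \<alpha>: "\<alpha> < k - 1"
  obtains \<epsilon> where "0 < \<epsilon>" "\<epsilon> \<le> 1/2"
    "\<forall>\<^sub>F r in sequentially. 2 \<le> r \<and> k * ln (real r) / real r \<le> 1/2 \<and>
       real r * excess_bound (k * ln (real r) / real r) \<epsilon> r \<le> (2 / real r) ^ r * real r powr (- \<alpha>)"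
proof
  define \<epsilon> where "\<epsilon> = min (1/4) ((k - 1 - \<alpha>) / (4 * k))"
  show \<epsilon>: "0 < \<epsilon>" "\<epsilon> \<le> 1/2" using k \<alpha> by (auto simp: \<epsilon>_def)
  define \<beta> where "\<beta> = 1 - (1 - 2 * \<epsilon>) * k + \<alpha>"
  have "\<epsilon> \<le> (k - 1 - \<alpha>) / (4 * k)" by (simp add: \<epsilon>_def)
  then have "2 * \<epsilon> * k \<le> 2 * ((k - 1 - \<alpha>) / (4 * k)) * k"
    using k by (intro mult_right_mono mult_left_mono) auto
  also have "\<dots> = (k - 1 - \<alpha>) / 2" using k by (simp add: field_simps)
  finally have \<beta>: "\<beta> < 0" using \<alpha> by (simp add: \<beta>_def algebra_simps)
  have "((\<lambda>r. k * (ln (real r) / real r)) \<longlongrightarrow> k * 0) sequentially"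
    by (intro tendsto_mult tendsto_const filterlim_compose[OF ln_x_over_x_tendsto_0 filterlim_real_sequentially])
  then have "((\<lambda>r. k * ln (real r) / real r) \<longlongrightarrow> 0) sequentially" by simp
  then have ev_c: "\<forall>\<^sub>F r in sequentially. k * ln (real r) / real r \<le> 1/2"
    by (rule eventually_mono[OF order_tendstoD(2)[where a="1/2"]]) simp_all
  have "((\<lambda>r. exp (2 + k) / \<epsilon> * real r powr \<beta>) \<longlongrightarrow> exp (2 + k) / \<epsilon> * 0) sequentially"
    by (intro tendsto_mult tendsto_const tendsto_neg_powr[OF \<beta> filterlim_real_sequentially])
  then have ev_small: "\<forall>\<^sub>F r in sequentially. exp (2 + k) / \<epsilon> * real r powr \<beta> \<le> 1"
    by (rule eventually_mono[OF order_tendstoD(2)[where a=1]]) simp_all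
  show "\<forall>\<^sub>F r in sequentially. 2 \<le> r \<and> k * ln (real r) / real r \<le> 1/2 \<and>
       real r * excess_bound (k * ln (real r) / real r) \<epsilon> r \<le> (2 / real r) ^ r * real r powr (- \<alpha>)"
    using eventually_ge_at_top[of 2] ev_c ev_small
  proof eventually_elim
    case (elim r)
    then show ?case using union_excess_bound_le[OF _ _ \<epsilon> refl] k unfolding \<beta>_def by auto
  qed
qed

section \<open>The weight distribution\<close>

locale nonincreasing_density =
  fixes g F :: "real \<Rightarrow> real"
  assumes g_nonneg: "\<forall>x\<in>{0..1}. 0 \<le> g x"
    and g_antimono: "antimono_on {0..1} g"
    and g_cont: "continuous_on {0..1} g"
    and g_total: "integral {0..1} g = 1"
    and F_def: "\<forall>x\<in>{0..1}. F x = integral {0..x} g"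
begin

abbreviation \<mu> :: "real measure" where "\<mu> \<equiv> dens_measure g"

lemma g_integrable_on: "0 \<le> a \<Longrightarrow> b \<le> 1 \<Longrightarrow> g integrable_on {a..b}"
  by (intro integrable_continuous_real continuous_on_subset[OF g_cont]) auto

lemma F_diff_eq_integral:
  assumes "0 \<le> a" "a \<le> b" "b \<le> 1"
  shows "F b - F a = integral {a..b} g"
  using Henstock_Kurzweil_Integration.integral_combine[of 0 a b g] g_integrable_on[of 0 b] assms F_def
  by simp

lemma F_0: "F 0 = 0" and F_1: "F 1 = 1"
  using F_def g_total by auto

lemma F_mono:
  assumes "0 \<le> a" "a \<le> b" "b \<le> 1"
  shows "F a \<le> F b"
proof -
  have "0 \<le> integral {a..b} g"
    using assms g_nonneg by (intro integral_nonneg g_integrable_on) auto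
  then show ?thesis using F_diff_eq_integral[OF assms] by simp
qed

lemma F_range: "a \<in> {0..1} \<Longrightarrow> F a \<in> {0..1}"
  using F_mono[of 0 a] F_mono[of a 1] F_0 F_1 by auto

lemma F_midpoint_concave:
  assumes a: "a \<in> {0..1}" and b: "b \<in> {0..1}"
  shows "F a + F b \<le> 2 * F ((a + b) / 2)"
proof -
  have concave: "F a + F b \<le> 2 * F ((a + b) / 2)" if a: "a \<in> {0..1}" and b: "b \<in> {0..1}" and ab: "a \<le> b" for a b
  proof -
    define m where "m = (a + b) / 2"
    have m: "a \<le> m" "m \<le> b" "m - a = b - m" using ab by (auto simp: m_def field_simps)
    have "integral {a..m} (\<lambda>_. g m) \<le> integral {a..m} g"
      by (rule integral_le[OF _ g_integrable_on]) (use a b m g_antimono in \<open>auto simp: monotone_on_def\<close>)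
    moreover have "integral {m..b} g \<le> integral {m..b} (\<lambda>_. g m)"
      by (rule integral_le[OF g_integrable_on]) (use a b m g_antimono in \<open>auto simp: monotone_on_def\<close>)
    ultimately have "F a + F b \<le> 2 * F m"
      using F_diff_eq_integral[of a m] F_diff_eq_integral[of m b] a b m by simp
    then show ?thesis by (simp add: m_def)
  qed
  show ?thesis
    using concave[OF a b] concave[OF b a] by (cases "a \<le> b") (auto simp: add.commute)
qed

lemma tail_midpoint_le_exp:
  assumes "a \<in> {0..1}" "b \<in> {0..1}"
  shows "1 - F ((a + b) / 2) \<le> exp (- (F a + F b) / 2)"
proof -
  have "1 - F ((a + b) / 2) \<le> 1 + - (F a + F b) / 2" using F_midpoint_concave[OF assms] by simp
  also have "\<dots> \<le> exp (- (F a + F b) / 2)" by (rule exp_ge_add_one_self)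
  finally show ?thesis .
qed

lemma F_has_real_derivative: "x \<in> {0..1} \<Longrightarrow> (F has_real_derivative g x) (at x within {0..1})"
  unfolding has_real_derivative_iff_has_vector_derivative
  by (rule has_vector_derivative_transform_within[OF integral_has_vector_derivative[OF g_cont], where d=1])
     (use F_def in auto)

lemma F_continuous_on: "continuous_on {0..1} F"
  using F_has_real_derivative
  by (meson DERIV_continuous continuous_on_eq_continuous_within)

text \<open>\<open>F\<close> is only specified on [0,1]; this continuous extension makes events involving \<open>F\<close> measurable.\<close>
definition F_ext :: "real \<Rightarrow> real" where
  "F_ext u = F (max 0 (min 1 u))"

lemma F_ext_eq [simp]: "u \<in> {0..1} \<Longrightarrow> F_ext u = F u"
  by (simp add: F_ext_def)

lemma F_ext_measurable [measurable]: "F_ext \<in> borel_measurable borel"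
proof -
  have "continuous_on UNIV (F \<circ> (\<lambda>u. max 0 (min 1 u)))"
    by (intro continuous_on_compose continuous_intros continuous_on_subset[OF F_continuous_on]) auto
  then show ?thesis unfolding F_ext_def comp_def by (rule borel_measurable_continuous_onI)
qed

lemma density_measurable [measurable]:
  "(\<lambda>x. ennreal (indicator {0..1} x * g x)) \<in> borel_measurable lborel"
proof -
  have "(\<lambda>x. indicator {0..1} x * g x) \<in> borel_measurable lborel"
    using borel_measurable_continuous_on_indicator[OF _ g_cont] by simp
  then show ?thesis by (intro measurable_compose[OF _ measurable_ennreal])
qed

lemma space_\<mu> [simp]: "space \<mu> = UNIV" and sets_\<mu> [simp]: "sets \<mu> = sets borel"
  by (simp_all add: dens_measure_def)

lemma nn_integral_\<mu>:
  assumes [measurable]: "h \<in> borel_measurable borel"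
  shows "(\<integral>\<^sup>+u. h u \<partial>\<mu>) = (\<integral>\<^sup>+u. ennreal (indicator {0..1} u * g u) * h u \<partial>lborel)"
  unfolding dens_measure_def by (rule nn_integral_density) auto

lemma nn_integral_g_tail:
  assumes a: "a \<in> {0..1}"
  shows "(\<integral>\<^sup>+u. ennreal (g u) * indicator {a..1} u \<partial>lborel) = ennreal (1 - F a)"
proof -
  have "(g has_integral (F 1 - F a)) {a..1}"
    using F_diff_eq_integral[of a 1] g_integrable_on[of a 1] a by (simp add: has_integral_integral)
  from nn_integral_has_integral_lebesgue'[OF _ this] show ?thesis
    using a g_nonneg F_1 by simp
qed

lemma emeasure_\<mu>:
  assumes "A \<in> sets borel"
  shows "emeasure \<mu> A = (\<integral>\<^sup>+u. ennreal (g u) * indicator ({0..1} \<inter> A) u \<partial>lborel)"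
proof -
  have "emeasure \<mu> A = (\<integral>\<^sup>+u. ennreal (indicator {0..1} u * g u) * indicator A u \<partial>lborel)"
    unfolding dens_measure_def by (rule emeasure_density[OF density_measurable]) (simp add: assms)
  also have "\<dots> = (\<integral>\<^sup>+u. ennreal (g u) * indicator ({0..1} \<inter> A) u \<partial>lborel)"
    by (intro nn_integral_cong) (auto simp: indicator_def)
  finally show ?thesis .
qed

lemma emeasure_\<mu>_atLeast: "a \<in> {0..1} \<Longrightarrow> emeasure \<mu> {a..} = ennreal (1 - F a)"
  using emeasure_\<mu>[of "{a..}"] nn_integral_g_tail[of a] by (simp add: Int_atLeastAtMost)

lemma prob_space_\<mu>: "prob_space \<mu>"
  using emeasure_\<mu>[of UNIV] nn_integral_g_tail[of 0] F_0 by (intro prob_spaceI) simp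

text \<open>\<open>F(X)\<close> is uniform on [0,1] for \<open>X\<close> distributed as \<open>\<mu>\<close>.\<close>
lemma nn_integral_exp_F:
  assumes m: "0 < m"
  shows "(\<integral>\<^sup>+u. ennreal (indicator {0..1} u * exp (- m * F_ext u)) \<partial>\<mu>) = ennreal ((1 - exp (- m)) / m)"
proof -
  define h where "h x = - exp (- m * F x) / m" for x
  have "(h has_real_derivative g x * exp (- m * F x)) (at x within {0..1})" if "x \<in> {0..1}" for x
    unfolding h_def using m
    by (auto intro!: derivative_eq_intros F_has_real_derivative[OF that] simp: field_simps)
  then have "((\<lambda>x. g x * exp (- m * F x)) has_integral (h 1 - h 0)) {0..1}"
    by (intro fundamental_theorem_of_calculus) (auto simp: has_real_derivative_iff_has_vector_derivative)
  from nn_integral_has_integral_lebesgue'[OF _ this]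
  have "(\<integral>\<^sup>+u. ennreal (g u * exp (- m * F u)) * indicator {0..1} u \<partial>lborel) = ennreal (h 1 - h 0)"
    using g_nonneg by simp
  moreover have "h 1 - h 0 = (1 - exp (- m)) / m"
    unfolding h_def using F_0 F_1 m by (simp add: field_simps)
  moreover have "(\<integral>\<^sup>+u. ennreal (indicator {0..1} u * exp (- m * F_ext u)) \<partial>\<mu>)
      = (\<integral>\<^sup>+u. ennreal (g u * exp (- m * F u)) * indicator {0..1} u \<partial>lborel)"
    by (subst nn_integral_\<mu>) (auto intro!: nn_integral_cong simp: indicator_def ennreal_mult'[symmetric] g_nonneg)
  ultimately show ?thesis by simp
qed

lemma product_sigma_finite_\<mu>: "product_sigma_finite (\<lambda>_::'i. \<mu>)"
  by (rule product_sigma_finite.intro) (rule prob_space_imp_sigma_finite[OF prob_space_\<mu>])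

lemma measurable_component_\<mu> [measurable]: "(\<lambda>\<omega>. \<omega> p) \<in> borel_measurable (PiM K (\<lambda>_. \<mu>))"
proof (cases "p \<in> K")
  case True
  then show ?thesis
    using measurable_component_singleton[of p K "\<lambda>_. \<mu>"] measurable_cong_sets[OF refl sets_\<mu>] by blast
next
  case False
  then have "(\<lambda>\<omega>. \<omega> p) \<in> borel_measurable (PiM K (\<lambda>_. \<mu>)) \<longleftrightarrow> (\<lambda>\<omega>. undefined :: real) \<in> borel_measurable (PiM K (\<lambda>_. \<mu>))"
    by (intro measurable_cong) (auto simp: space_PiM PiE_def extensional_def)
  then show ?thesis by simp
qed

lemma nn_integral_prod_indicator_atLeast:
  fixes a :: "'i \<Rightarrow> real"
  assumes K: "finite K" and P: "P \<subseteq> K" and a: "\<forall>p\<in>P. a p \<in> {0..1}"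
  shows "(\<integral>\<^sup>+y. (\<Prod>p\<in>P. indicator {a p..} (y p)) \<partial>PiM K (\<lambda>_. \<mu>)) = (\<Prod>p\<in>P. ennreal (1 - F (a p)))"
proof -
  interpret product_sigma_finite "\<lambda>_::'i. \<mu>" by (rule product_sigma_finite_\<mu>)
  define f where "f p u = (if p \<in> P then indicator {a p..} u else 1 :: ennreal)" for p u
  have "(\<integral>\<^sup>+y. (\<Prod>p\<in>P. indicator {a p..} (y p)) \<partial>PiM K (\<lambda>_. \<mu>)) = (\<integral>\<^sup>+y. (\<Prod>p\<in>K. f p (y p)) \<partial>PiM K (\<lambda>_. \<mu>))"
    by (intro nn_integral_cong prod.mono_neutral_cong_left[OF K P]) (auto simp: f_def)
  also have "\<dots> = (\<Prod>p\<in>K. \<integral>\<^sup>+u. f p u \<partial>\<mu>)"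
    by (rule product_nn_integral_prod[OF K]) (simp add: f_def measurable_cong_sets[OF sets_\<mu> refl])
  also have "\<dots> = (\<Prod>p\<in>P. ennreal (1 - F (a p)))"
    using a prob_space.emeasure_space_1[OF prob_space_\<mu>]
    by (intro prod.mono_neutral_cong_right[OF K P]) (auto simp: f_def emeasure_\<mu>_atLeast)
  finally show ?thesis .
qed

lemma offdiag_tail_le_exp:
  fixes x :: "nat \<Rightarrow> real"
  assumes I: "finite I" and K: "finite K" "offdiag_pairs I \<subseteq> K" and x: "\<forall>j\<in>I. x j \<in> {0..1}"
  shows "(\<integral>\<^sup>+y. (\<Prod>p\<in>offdiag_pairs I. indicator {(x (fst p) + x (snd p)) / 2..} (y p)) \<partial>PiM K (\<lambda>_. \<mu>))
       \<le> ennreal (exp (- (real (card I - 1) / 2) * (\<Sum>j\<in>I. F (x j))))"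
proof -
  have x_p: "x (fst p) \<in> {0..1}" "x (snd p) \<in> {0..1}" if "p \<in> offdiag_pairs I" for p
    using that x by (auto simp: offdiag_pairs_def)
  then have mid_p: "(x (fst p) + x (snd p)) / 2 \<in> {0..1}" if "p \<in> offdiag_pairs I" for p
    using that by fastforce
  have "(\<integral>\<^sup>+y. (\<Prod>p\<in>offdiag_pairs I. indicator {(x (fst p) + x (snd p)) / 2..} (y p)) \<partial>PiM K (\<lambda>_. \<mu>))
      = ennreal (\<Prod>p\<in>offdiag_pairs I. 1 - F ((x (fst p) + x (snd p)) / 2))"
    using mid_p F_range
    by (subst nn_integral_prod_indicator_atLeast[OF K]) (auto intro!: prod_ennreal)
  also have "\<dots> \<le> ennreal (\<Prod>p\<in>offdiag_pairs I. exp (- (F (x (fst p)) + F (x (snd p))) / 2))"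
    using x_p mid_p F_range tail_midpoint_le_exp by (intro ennreal_leI prod_mono) fastforce
  also have "(\<Prod>p\<in>offdiag_pairs I. exp (- (F (x (fst p)) + F (x (snd p))) / 2))
      = exp (- (\<Sum>p\<in>offdiag_pairs I. F (x (fst p)) + F (x (snd p))) / 2)"
    by (simp only: exp_sum[OF finite_offdiag_pairs[OF I], symmetric] sum_divide_distrib[symmetric] sum_negf)
  also have "\<dots> = exp (- (real (card I - 1) / 2) * (\<Sum>j\<in>I. F (x j)))"
    using sum_offdiag_pairs[OF I, of "\<lambda>j. F (x j)"] by simp
  finally show ?thesis .
qed

lemma nn_integral_prod_exp_F:
  fixes m :: "'i \<Rightarrow> real"
  assumes K: "finite K" and m: "\<forall>q\<in>K. 0 < m q"
  shows "(\<integral>\<^sup>+x. (\<Prod>q\<in>K. ennreal (indicator {0..1} (x q) * exp (- m q * F_ext (x q)))) \<partial>PiM K (\<lambda>_. \<mu>))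
       = ennreal (\<Prod>q\<in>K. (1 - exp (- m q)) / m q)"
proof -
  interpret product_sigma_finite "\<lambda>_::'i. \<mu>" by (rule product_sigma_finite_\<mu>)
  have "(\<integral>\<^sup>+x. (\<Prod>q\<in>K. ennreal (indicator {0..1} (x q) * exp (- m q * F_ext (x q)))) \<partial>PiM K (\<lambda>_. \<mu>))
      = (\<Prod>q\<in>K. \<integral>\<^sup>+u. ennreal (indicator {0..1} u * exp (- m q * F_ext u)) \<partial>\<mu>)"
    by (rule product_nn_integral_prod[OF K, of "\<lambda>q u. ennreal (indicator {0..1} u * exp (- m q * F_ext u))"])
       (simp add: measurable_cong_sets[OF sets_\<mu> refl])
  also have "\<dots> = (\<Prod>q\<in>K. ennreal ((1 - exp (- m q)) / m q))"
    using m by (intro prod.cong refl nn_integral_exp_F) auto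
  also have "\<dots> = ennreal (\<Prod>q\<in>K. (1 - exp (- m q)) / m q)"
    using m by (intro prod_ennreal) (simp add: less_imp_le)
  finally show ?thesis .
qed

section \<open>Chernoff bound for a dominant diagonal weight\<close>

lemma prob_space_weight_space: "prob_space (weight_space n g)"
  unfolding weight_space_def by (intro prob_space_PiM prob_space_\<mu>)

definition excess_event :: "nat \<Rightarrow> nat set \<Rightarrow> real \<Rightarrow> nat \<Rightarrow> ((nat \<times> nat) \<Rightarrow> real) set" where
  "excess_event n I c i = {\<omega> \<in> space (weight_space n g).
     (\<forall>j\<in>I. \<omega> (j, j) \<in> {0..1}) \<and>
     (\<forall>p\<in>offdiag_pairs I. (\<omega> (fst p, fst p) + \<omega> (snd p, snd p)) / 2 \<le> \<omega> p) \<and>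
     c * (\<Sum>j\<in>I. F_ext (\<omega> (j, j))) \<le> F_ext (\<omega> (i, i))}"

lemma excess_event_sets: "finite I \<Longrightarrow> excess_event n I c i \<in> sets (weight_space n g)"
proof -
  assume [measurable]: "finite I"
  note finite_offdiag_pairs[OF this, measurable]
  show ?thesis unfolding excess_event_def weight_space_def by measurable
qed

lemma tilted_offdiag_tail_le:
  fixes d :: "nat \<Rightarrow> real" and I :: "nat set"
  defines "lam \<equiv> real (card I - 1) / 2"
  assumes I: "finite I" "i \<in> I" and K: "finite K" "offdiag_pairs I \<subseteq> K"
  shows "ennreal ((\<Prod>j\<in>I. indicator {0..1} (d j)) * exp (t * (F_ext (d i) - c * (\<Sum>j\<in>I. F_ext (d j))))) *
       (\<integral>\<^sup>+y. (\<Prod>p\<in>offdiag_pairs I. indicator {(d (fst p) + d (snd p)) / 2..} (y p)) \<partial>PiM K (\<lambda>_. \<mu>))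
     \<le> ennreal (\<Prod>j\<in>I. indicator {0..1} (d j) * exp (- (lam + t * c - (if j = i then t else 0)) * F_ext (d j)))"
proof (cases "\<forall>j\<in>I. d j \<in> {0..1}")
  case True
  have ind: "(\<Prod>j\<in>I. indicator {0..1} (d j) :: real) = 1" using True by (intro prod.neutral) simp
  have "(\<integral>\<^sup>+y. (\<Prod>p\<in>offdiag_pairs I. indicator {(d (fst p) + d (snd p)) / 2..} (y p)) \<partial>PiM K (\<lambda>_. \<mu>))
      \<le> ennreal (exp (- lam * (\<Sum>j\<in>I. F_ext (d j))))"
    using offdiag_tail_le_exp[OF I(1) K True] True by (simp add: lam_def)
  then have "ennreal ((\<Prod>j\<in>I. indicator {0..1} (d j)) * exp (t * (F_ext (d i) - c * (\<Sum>j\<in>I. F_ext (d j))))) *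
       (\<integral>\<^sup>+y. (\<Prod>p\<in>offdiag_pairs I. indicator {(d (fst p) + d (snd p)) / 2..} (y p)) \<partial>PiM K (\<lambda>_. \<mu>))
     \<le> ennreal (exp (t * (F_ext (d i) - c * (\<Sum>j\<in>I. F_ext (d j))))) *
       ennreal (exp (- lam * (\<Sum>j\<in>I. F_ext (d j))))"
    unfolding ind mult_1 by (rule mult_left_mono) simp_all
  also have "\<dots> = ennreal (exp (t * (F_ext (d i) - c * (\<Sum>j\<in>I. F_ext (d j)))) * exp (- lam * (\<Sum>j\<in>I. F_ext (d j))))"
    by (rule ennreal_mult'[symmetric]) simp
  also have "\<dots> = ennreal (\<Prod>j\<in>I. exp (- (lam + t * c - (if j = i then t else 0)) * F_ext (d j)))"
    using exp_tilt_eq_prod[OF I, where a = "\<lambda>j. F_ext (d j)"] by simp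
  also have "\<dots> = ennreal (\<Prod>j\<in>I. indicator {0..1} (d j) * exp (- (lam + t * c - (if j = i then t else 0)) * F_ext (d j)))"
    using ind by (simp add: prod.distrib)
  finally show ?thesis .
next
  case False
  then obtain j where j: "j \<in> I" "d j \<notin> {0..1}" by blast
  then have "(\<Prod>j\<in>I. indicator {0..1} (d j) :: real) = 0" by (intro prod_zero[OF I(1)] bexI[OF _ j(1)]) simp
  then show ?thesis by simp
qed

text \<open>Markov's inequality for the exponential tilt, which is at least 1 on the event.\<close>
lemma emeasure_excess_event_le_tilted:
  assumes fin: "finite I" and t: "0 \<le> t"
  shows "emeasure (weight_space n g) (excess_event n I c i)
    \<le> (\<integral>\<^sup>+\<omega>. ennreal ((\<Prod>j\<in>I. indicator {0..1} (\<omega> (j, j))) *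
            exp (t * (F_ext (\<omega> (i, i)) - c * (\<Sum>j\<in>I. F_ext (\<omega> (j, j)))))) *
          (\<Prod>p\<in>offdiag_pairs I. indicator {(\<omega> (fst p, fst p) + \<omega> (snd p, snd p)) / 2..} (\<omega> p))
        \<partial>weight_space n g)"
proof -
  have "indicator (excess_event n I c i) \<omega>
      \<le> ennreal ((\<Prod>j\<in>I. indicator {0..1} (\<omega> (j, j))) *
            exp (t * (F_ext (\<omega> (i, i)) - c * (\<Sum>j\<in>I. F_ext (\<omega> (j, j)))))) *
          (\<Prod>p\<in>offdiag_pairs I. indicator {(\<omega> (fst p, fst p) + \<omega> (snd p, snd p)) / 2..} (\<omega> p))" for \<omega>
    using t by (auto simp: excess_event_def indicator_def prod.neutral)
  then have "(\<integral>\<^sup>+\<omega>. indicator (excess_event n I c i) \<omega> \<partial>weight_space n g)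
      \<le> (\<integral>\<^sup>+\<omega>. ennreal ((\<Prod>j\<in>I. indicator {0..1} (\<omega> (j, j))) *
            exp (t * (F_ext (\<omega> (i, i)) - c * (\<Sum>j\<in>I. F_ext (\<omega> (j, j)))))) *
          (\<Prod>p\<in>offdiag_pairs I. indicator {(\<omega> (fst p, fst p) + \<omega> (snd p, snd p)) / 2..} (\<omega> p))
        \<partial>weight_space n g)"
    by (intro nn_integral_mono)
  then show ?thesis using excess_event_sets[OF fin] by simp
qed

lemma emeasure_excess_event_le:
  fixes I :: "nat set"
  defines "lam \<equiv> real (card I - 1) / 2"
  assumes fin: "finite I" and In: "I \<subseteq> {0..<n}" and i: "i \<in> I" and t: "0 \<le> t"
    and pos: "0 < lam + t * c - t"
  shows "emeasure (weight_space n g) (excess_event n I c i)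
       \<le> ennreal (1 / (lam + t * c - t) * (1 / (lam + t * c)) ^ (card I - 1))"
proof -
  interpret product_sigma_finite "\<lambda>_::nat \<times> nat. \<mu>" by (rule product_sigma_finite_\<mu>)
  define Diag where "Diag = (\<lambda>j. (j, j)) ` I"
  define Rest where "Rest = pairs n - Diag"
  have Diag: "Diag \<inter> Rest = {}" "pairs n = Diag \<union> Rest" "finite Diag" "finite Rest"
    using In fin finite_pairs[of n] by (auto simp: Diag_def Rest_def pairs_def)
  have off_Rest: "offdiag_pairs I \<subseteq> Rest"
    using In by (auto simp: offdiag_pairs_def Rest_def Diag_def pairs_def)
  have inj: "inj_on (\<lambda>j. (j, j)) I" by (auto simp: inj_on_def)
  define m where "m j = lam + t * c - (if j = i then t else 0)" for j
  define tilt where "tilt x = ennreal ((\<Prod>j\<in>I. indicator {0..1} (x (j, j))) *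
      exp (t * (F_ext (x (i, i)) - c * (\<Sum>j\<in>I. F_ext (x (j, j))))))" for x :: "nat \<times> nat \<Rightarrow> real"
  define above where "above x y = (\<Prod>p\<in>offdiag_pairs I.
      indicator {(x (fst p, fst p) + x (snd p, snd p)) / 2..} (y p) :: ennreal)" for x y :: "nat \<times> nat \<Rightarrow> real"
  have [measurable]: "(\<lambda>\<omega>. tilt \<omega> * above \<omega> \<omega>) \<in> borel_measurable (PiM (pairs n) (\<lambda>_. \<mu>))"
    using fin finite_offdiag_pairs[OF fin] unfolding tilt_def above_def by measurable
  have "emeasure (weight_space n g) (excess_event n I c i) \<le> (\<integral>\<^sup>+\<omega>. tilt \<omega> * above \<omega> \<omega> \<partial>PiM (pairs n) (\<lambda>_. \<mu>))"
    using emeasure_excess_event_le_tilted[OF fin t] unfolding tilt_def above_def weight_space_def .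
  also have "\<dots> = (\<integral>\<^sup>+x. \<integral>\<^sup>+y. tilt (merge Diag Rest (x, y)) * above (merge Diag Rest (x, y)) (merge Diag Rest (x, y))
      \<partial>PiM Rest (\<lambda>_. \<mu>) \<partial>PiM Diag (\<lambda>_. \<mu>))"
    unfolding Diag(2) by (rule product_nn_integral_fold[OF Diag(1,3,4)]) (simp add: Diag(2)[symmetric])
  also have "\<dots> \<le> (\<integral>\<^sup>+x. (\<Prod>q\<in>Diag. ennreal (indicator {0..1} (x q) * exp (- m (fst q) * F_ext (x q)))) \<partial>PiM Diag (\<lambda>_. \<mu>))"
  proof (rule nn_integral_mono)
    fix x :: "nat \<times> nat \<Rightarrow> real"
    have diag: "merge Diag Rest (x, y) (j, j) = x (j, j)" if "j \<in> I" for j y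
      using that Diag(1) by (auto simp: Diag_def)
    have "tilt (merge Diag Rest (x, y)) * above (merge Diag Rest (x, y)) (merge Diag Rest (x, y))
        = tilt x * (\<Prod>p\<in>offdiag_pairs I. indicator {(x (fst p, fst p) + x (snd p, snd p)) / 2..} (y p))" for y
      using off_Rest Diag(1) i unfolding tilt_def above_def
      by (auto simp: diag offdiag_pairs_def intro!: arg_cong2[where f="(*)"] prod.cong sum.cong)
    then have "(\<integral>\<^sup>+y. tilt (merge Diag Rest (x, y)) * above (merge Diag Rest (x, y)) (merge Diag Rest (x, y)) \<partial>PiM Rest (\<lambda>_. \<mu>))
        = tilt x * (\<integral>\<^sup>+y. (\<Prod>p\<in>offdiag_pairs I. indicator {(x (fst p, fst p) + x (snd p, snd p)) / 2..} (y p)) \<partial>PiM Rest (\<lambda>_. \<mu>))"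
      by (simp add: nn_integral_cmult)
    also have "\<dots> \<le> ennreal (\<Prod>j\<in>I. indicator {0..1} (x (j, j)) * exp (- m j * F_ext (x (j, j))))"
      using tilted_offdiag_tail_le[OF fin i Diag(4) off_Rest, of "\<lambda>j. x (j, j)" t c]
      unfolding tilt_def m_def lam_def by simp
    also have "\<dots> = (\<Prod>q\<in>Diag. ennreal (indicator {0..1} (x q) * exp (- m (fst q) * F_ext (x q))))"
      by (simp add: Diag_def prod.reindex[OF inj] prod_ennreal)
    finally show "(\<integral>\<^sup>+y. tilt (merge Diag Rest (x, y)) * above (merge Diag Rest (x, y)) (merge Diag Rest (x, y)) \<partial>PiM Rest (\<lambda>_. \<mu>))
        \<le> (\<Prod>q\<in>Diag. ennreal (indicator {0..1} (x q) * exp (- m (fst q) * F_ext (x q))))" .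
  qed
  also have "\<dots> = ennreal (\<Prod>q\<in>Diag. (1 - exp (- m (fst q))) / m (fst q))"
    using pos t by (intro nn_integral_prod_exp_F Diag(3)) (auto simp: m_def)
  also have "\<dots> \<le> ennreal (1 / (lam + t * c - t) * (1 / (lam + t * c)) ^ (card I - 1))"
    using prod_tilted_le[OF fin i t, of "lam + t * c"] pos
    by (intro ennreal_leI) (simp add: Diag_def prod.reindex[OF inj] m_def)
  finally show ?thesis .
qed

lemma measure_excess_event_le:
  assumes fin: "finite I" and In: "I \<subseteq> {0..<n}" and i: "i \<in> I" and r: "2 \<le> card I"
    and c: "c < 1" and \<epsilon>: "0 < \<epsilon>" "\<epsilon> < 1"
  shows "measure (weight_space n g) (excess_event n I c i) \<le> excess_bound c \<epsilon> (card I)"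
proof -
  interpret prob_space "weight_space n g" by (rule prob_space_weight_space)
  define lam where "lam = real (card I - 1) / 2"
  define t where "t = lam * (1 - \<epsilon>) / (1 - c)"
  have lam: "0 < lam" and inv_lam: "1 / lam = 2 / (real (card I) - 1)"
    using r by (auto simp: lam_def of_nat_diff)
  note choice = chernoff_tilt_choice[OF lam c \<epsilon>, folded t_def]
  have bound_eq: "1 / (lam + t * c - t) * (1 / (lam + t * c)) ^ (card I - 1) = excess_bound c \<epsilon> (card I)"
    unfolding choice(4) inv_lam excess_bound_def using r by (simp add: Suc_diff_1)
  have pos: "0 < lam + t * c - t" using choice(2) lam \<epsilon> by simp
  from emeasure_excess_event_le[OF fin In i choice(1) pos[unfolded lam_def]]
  have "emeasure (weight_space n g) (excess_event n I c i) \<le> ennreal (excess_bound c \<epsilon> (card I))"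
    unfolding lam_def[symmetric] bound_eq .
  moreover have "0 \<le> excess_bound c \<epsilon> (card I)"
    unfolding bound_eq[symmetric] using choice(3) pos
    by (intro mult_nonneg_nonneg zero_le_power) simp_all
  ultimately show ?thesis by (simp add: emeasure_eq_measure)
qed

section \<open>Union bound\<close>

definition event_DC :: "nat \<Rightarrow> nat set \<Rightarrow> ((nat \<Rightarrow> real) \<Rightarrow> bool) \<Rightarrow> ((nat \<times> nat) \<Rightarrow> real) set" where
  "event_DC n I C = event_D n g I \<inter> {\<omega> \<in> space (weight_space n g). C (\<lambda>i. fval \<omega> i i)}"

lemma in_C1_F_ext: "in_C1 F I = in_C1 F_ext I"
  by (auto simp: fun_eq_iff in_C1_def cong: sum.cong)

lemma in_C2_F_ext: "in_C2 F k I = in_C2 F_ext k I"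
  by (auto simp: fun_eq_iff in_C2_def in_C1_def cong: sum.cong)

lemma event_DC_sets:
  assumes "finite I"
  shows "event_DC n I (in_C1 F I) \<in> sets (weight_space n g)"
    and "event_DC n I (in_C2 F k I) \<in> sets (weight_space n g)"
  using assms unfolding in_C1_F_ext in_C2_F_ext
  unfolding event_DC_def event_D_def fval_def in_C2_def in_C1_def weight_space_def
  by measurable

lemma event_DC_diff_subset:
  fixes k :: real and I :: "nat set"
  defines "c \<equiv> k * ln (real (card I)) / real (card I)"
  shows "event_DC n I (in_C1 F I) - event_DC n I (in_C2 F k I) \<subseteq> (\<Union>i\<in>I. excess_event n I c i)"
proof
  fix \<omega> assume \<omega>: "\<omega> \<in> event_DC n I (in_C1 F I) - event_DC n I (in_C2 F k I)"
  define x where "x = (\<lambda>i. \<omega> (i, i))"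
  have space: "\<omega> \<in> space (weight_space n g)" and D: "\<omega> \<in> event_D n g I"
    and C1: "in_C1 F I x" and not_C2: "\<not> in_C2 F k I x"
    using \<omega> by (auto simp: event_DC_def x_def fval_def)
  have x01: "\<forall>j\<in>I. x j \<in> {0..1}" using C1 by (simp add: in_C1_def)
  have "real (card I) powr (- 1 / 3) \<le> 1"
    by (cases "card I = 0") (auto simp: powr_minus_divide ge_one_powr_ge_zero)
  then have sum_ge_1: "1 \<le> (\<Sum>j\<in>I. F (x j))" using C1 by (auto simp: in_C1_def)
  obtain i where i: "i \<in> I" and big: "c * (\<Sum>j\<in>I. F (x j)) < F (x i)"
    using not_C2 C1 sum_ge_1 by (auto simp: in_C2_def c_def not_le less_divide_eq)
  have "(\<Sum>j\<in>I. F (x j)) = (\<Sum>j\<in>I. F_ext (\<omega> (j, j)))"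
    using x01 unfolding x_def by (intro sum.cong) simp_all
  then have excess: "c * (\<Sum>j\<in>I. F_ext (\<omega> (j, j))) \<le> F_ext (\<omega> (i, i))"
    using big x01 i unfolding x_def by simp
  have "(\<omega> (fst p, fst p) + \<omega> (snd p, snd p)) / 2 \<le> \<omega> p" if p_in: "p \<in> offdiag_pairs I" for p
  proof -
    obtain a b where p: "p = (a, b)" "a \<in> I" "b \<in> I" "a < b"
      using p_in unfolding offdiag_pairs_def by blast
    have "\<forall>i\<in>I. \<forall>j\<in>I. i \<noteq> j \<longrightarrow> (fval \<omega> i i + fval \<omega> j j) / 2 \<le> fval \<omega> i j"
      using D by (simp add: event_D_def)
    from this[rule_format, OF p(2,3)] p(4) have "(fval \<omega> a a + fval \<omega> b b) / 2 \<le> fval \<omega> a b"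
      by simp
    then show ?thesis using p by (simp add: fval_def)
  qed
  then have "\<omega> \<in> excess_event n I c i"
    using space x01 excess unfolding excess_event_def x_def by blast
  then show "\<omega> \<in> (\<Union>i\<in>I. excess_event n I c i)" using i by blast
qed

lemma prob_C1_minus_C2_le:
  fixes k :: real and I :: "nat set"
  defines "c \<equiv> k * ln (real (card I)) / real (card I)"
  assumes In: "I \<subseteq> {0..<n}" and r: "2 \<le> card I" and c: "c < 1" and \<epsilon>: "0 < \<epsilon>" "\<epsilon> < 1"
  shows "prob_C n g I (in_C1 F I) - prob_C n g I (in_C2 F k I) \<le> real (card I) * excess_bound c \<epsilon> (card I)"
proof -
  interpret prob_space "weight_space n g" by (rule prob_space_weight_space)
  have fin: "finite I" using r card.infinite by force
  have C2_C1: "event_DC n I (in_C2 F k I) \<subseteq> event_DC n I (in_C1 F I)"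
    by (auto simp: event_DC_def in_C2_def)
  have "prob_C n g I (in_C1 F I) - prob_C n g I (in_C2 F k I)
      = prob (event_DC n I (in_C1 F I) - event_DC n I (in_C2 F k I))"
    using finite_measure_Diff[OF event_DC_sets[OF fin] C2_C1] by (simp add: prob_C_def event_DC_def)
  also have "\<dots> \<le> prob (\<Union>i\<in>I. excess_event n I c i)"
    using event_DC_diff_subset[of n I k] excess_event_sets[OF fin] fin
    by (intro finite_measure_mono) (auto simp: c_def)
  also have "\<dots> \<le> (\<Sum>i\<in>I. prob (excess_event n I c i))"
    using excess_event_sets[OF fin] fin by (intro finite_measure_subadditive_finite) auto
  also have "\<dots> \<le> (\<Sum>i\<in>I. excess_bound c \<epsilon> (card I))"
    using measure_excess_event_le[OF fin In _ r c \<epsilon>] by (intro sum_mono)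
  finally show ?thesis by simp
qed

end

theorem lemma2p4:
  fixes g F :: "real \<Rightarrow> real" and k \<alpha> :: real
  assumes g_pos: "\<forall>x\<in>{0..1}. g x > 0"
    and g_noninc: "antimono_on {0..1} g"
    and g_diff: "\<forall>x\<in>{0..1}. g differentiable (at x within {0..1})"
    and g_int: "g integrable_on {0..1}"
    and g_total: "integral {0..1} g = 1"
    and F_def: "\<forall>x\<in>{0..1}. F x = integral {0..x} g"
    and hazard: "mono_on {0..<1} (\<lambda>x. g x / (1 - F x))"
    and k: "k > 1"
    and \<alpha>: "\<alpha> < k - 1"
  shows "\<exists>R::nat. \<forall>r\<ge>R. \<forall>(n::nat) (I::nat set). I \<subseteq> {0..<n} \<and> card I = r \<longrightarrow>
           prob_C n g I (in_C1 F I) - prob_C n g I (in_C2 F k I)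
             \<le> (2 / real r) ^ r * real r powr (-\<alpha>)"
proof -
  interpret nonincreasing_density g F
    using g_pos g_noninc g_diff g_total F_def
    by unfold_locales
      (auto intro: less_imp_le simp: continuous_on_eq_continuous_within differentiable_imp_continuous_within)
  obtain \<epsilon> where \<epsilon>: "0 < \<epsilon>" "\<epsilon> \<le> 1/2" and "\<forall>\<^sub>F r in sequentially. 2 \<le> r \<and>
      k * ln (real r) / real r \<le> 1/2 \<and>
      real r * excess_bound (k * ln (real r) / real r) \<epsilon> r \<le> (2 / real r) ^ r * real r powr (- \<alpha>)"
    using eventually_union_excess_bound_le[OF k \<alpha>] by blast
  then obtain R where R: "\<And>r. R \<le> r \<Longrightarrow> 2 \<le> r \<and> k * ln (real r) / real r \<le> 1/2 \<and>
      real r * excess_bound (k * ln (real r) / real r) \<epsilon> r \<le> (2 / real r) ^ r * real r powr (- \<alpha>)"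
    by (auto simp: eventually_sequentially)
  show ?thesis
  proof (intro exI[of _ R] allI impI)
    fix r n :: nat and I :: "nat set"
    assume "R \<le> r" and "I \<subseteq> {0..<n} \<and> card I = r"
    then show "prob_C n g I (in_C1 F I) - prob_C n g I (in_C2 F k I) \<le> (2 / real r) ^ r * real r powr (- \<alpha>)"
      using R[of r] prob_C1_minus_C2_le[of I n k \<epsilon>] \<epsilon> by fastforce
  qed
qed

end
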